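(* Let $\overline{X}\in\mathbb{R}^{d\times n}$ be a matrix with all columns equal to some $\overline{\mathbf{x}}\in\mathbb{R}^d$, let $\xi = (\xi_1,\dots,\xi_n)$ with $\xi_i\sim\mathcal{D}_i$ independent, and let $W^*(\xi)\in\mathcal{M}_w$ be any mixing matrix (possibly depending on $\xi$). Assume $\frac1n\sum_{i=1}^n\mathbb{E}_{\xi_i}\|\nabla F_i(\mathbf{x},\xi_i) - \nabla f_i(\mathbf{x})\|^2\leq\sigma^2$ for all $\mathbf{x}$. Then $$\mathbb{E}\big\|(\partial f(\overline{X}) - \overline{\partial f}(\overline{X}))W^*(\xi)\big\|_F^2 \leq 2\,\mathbb{E}\big\|(\partial f(\overline{X},\xi) - \overline{\partial f}(\overline{X},\xi))W^*(\xi)\big\|_F^2 + 2n\sigma^2.$$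
   Context: $f_i(\mathbf{x}) = \mathbb{E}_{\xi\sim\mathcal{D}_i}F_i(\mathbf{x},\xi)$. For $X = [\mathbf{x}_1,\dots,\mathbf{x}_n]$: $\partial f(X) = [\nabla f_1(\mathbf{x}_1),\dots,\nabla f_n(\mathbf{x}_n)]$, $\partial f(X,\xi) = [\nabla F_1(\mathbf{x}_1,\xi_1),\dots,\nabla F_n(\mathbf{x}_n,\xi_n)]$, and for any $Y\in\mathbb{R}^{d\times n}$, $\overline{Y} = Y\frac{\mathbf{1}\mathbf{1}^\top}{n}$ (so $\overline{\partial f}(X) = \partial f(X)\frac{\mathbf{1}\mathbf{1}^\top}{n}$, $\overline{\partial f}(X,\xi) = \partial f(X,\xi)\frac{\mathbf{1}\mathbf{1}^\top}{n}$). Given a graph $G=(V,E)$ on $n$ nodes, $\mathcal{M}_w = \{W\in\mathbb{R}^{n\times n}: W\mathbf{1} = \mathbf{1},\ \mathbf{1}^\top W = \mathbf{1}^\top,\ 0\le w_{ij}\le1,\ w_{ij}=0\ \forall(i,j)\notin E\}$. Expectations are over $\xi$. *)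

theory Defs
  imports "HOL-Probability.Probability"
begin

text \<open>Matrices in R^(d x n) are rendered as real^'n^'d (rows indexed by 'd, columns by 'n);
  n x n mixing matrices as real^'n^'n.  The matrix product is (**).\<close>

definition colmat :: "('n::finite \<Rightarrow> real^'d) \<Rightarrow> real^'n^'d" where
  "colmat v = (\<chi> k j. v j $ k)"

definition avg_mat :: "real^'n::finite^'d \<Rightarrow> real^'n^'d" where
  "avg_mat Y = Y ** (\<chi> i j. 1 / real CARD('n))"

definition frob_sq :: "real^'n::finite^'d::finite \<Rightarrow> real" where
  "frob_sq A = (\<Sum>k\<in>UNIV. \<Sum>j\<in>UNIV. (A $ k $ j)^2)"

definition mixing_set :: "('n::finite \<times> 'n) set \<Rightarrow> (real^'n^'n) set" where
  "mixing_set E = {W. (\<forall>i. (\<Sum>j\<in>UNIV. W $ i $ j) = 1) \<and> (\<forall>j. (\<Sum>i\<in>UNIV. W $ i $ j) = 1)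
      \<and> (\<forall>i j. 0 \<le> W $ i $ j \<and> W $ i $ j \<le> 1) \<and> (\<forall>i j. (i, j) \<notin> E \<longrightarrow> W $ i $ j = 0)}"

end

theory Submission
  imports Defs
begin

text \<open>Write \<Delta> = \<partial>f(X) - \<partial>f(X,\<xi>) and C(Y) = Y - Ybar for the centering map. Both C and
  right multiplication by W are linear, so C(\<partial>f(X)) W = C(\<partial>f(X,\<xi>)) W + C(\<Delta>) W, and
  (a + b)^2 \<le> 2a^2 + 2b^2 reduces the claim to E \<parallel>C(\<Delta>) W\<parallel>_F^2 \<le> n\<sigma>^2. Both maps are
  nonexpansive in the Frobenius norm: centering subtracts from each row its mean, and a doubly
  stochastic W contracts by Jensen's inequality down each column followed by the unit row sums.
  Hence \<parallel>C(\<Delta>) W\<parallel>_F^2 \<le> \<parallel>\<Delta>\<parallel>_F^2 = \<Sum>_i \<parallel>\<nabla>F_i(x,\<xi>_i) - \<nabla>f_i(x)\<parallel>^2, whose expectation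
  involves only the marginals \<xi>_i \<sim> D_i and is at most n\<sigma>^2 by the variance bound.\<close>

lemma matrix_add_rdistrib: "(A + B) ** C = A ** C + B ** (C :: 'a::semiring_1^'p^'n)"
  by (simp add: matrix_matrix_mult_def vec_eq_iff sum.distrib distrib_right)

lemma avg_mat_diff: "avg_mat (X - Y) = avg_mat X - avg_mat Y"
  by (simp add: avg_mat_def matrix_matrix_mult_def vec_eq_iff sum_subtractf
      left_diff_distrib diff_divide_distrib)

lemma colmat_diff: "colmat u - colmat v = colmat (\<lambda>j. u j - v j)"
  by (simp add: colmat_def vec_eq_iff)

lemma frob_sq_nonneg: "0 \<le> frob_sq A"
  by (simp add: frob_sq_def sum_nonneg)

lemma frob_sq_minus_commute: "frob_sq (A - B) = frob_sq (B - A)"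
  by (simp add: frob_sq_def power2_commute)

lemma frob_sq_add_le: "frob_sq (A + B) \<le> 2 * frob_sq A + 2 * frob_sq B"
proof -
  have "(a + b)\<^sup>2 \<le> 2 * a\<^sup>2 + 2 * b\<^sup>2" for a b :: real
    using sum_squares_bound[of a b] by (simp add: power2_sum)
  then show ?thesis
    by (simp add: frob_sq_def sum_distrib_left flip: sum.distrib add: sum_mono)
qed

lemma frob_sq_colmat: "frob_sq (colmat v) = (\<Sum>j\<in>UNIV. (norm (v j))\<^sup>2)"
proof -
  have "frob_sq (colmat v) = (\<Sum>j\<in>UNIV. \<Sum>k\<in>UNIV. (v j $ k)\<^sup>2)"
    unfolding frob_sq_def colmat_def by (simp, rule sum.swap)
  then show ?thesis
    by (simp add: norm_vec_def L2_set_def sum_nonneg)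
qed

lemma sum_sq_centered_le:
  fixes r :: "'a \<Rightarrow> real"
  assumes "finite A"
  shows "(\<Sum>i\<in>A. (r i - (\<Sum>l\<in>A. r l) / card A)\<^sup>2) \<le> (\<Sum>i\<in>A. (r i)\<^sup>2)"
proof -
  define m where "m = (\<Sum>l\<in>A. r l) / card A"
  have "(\<Sum>l\<in>A. r l) = card A * m"
    using assms by (cases "A = {}") (simp_all add: m_def)
  then have "(\<Sum>i\<in>A. (r i - m)\<^sup>2) = (\<Sum>i\<in>A. (r i)\<^sup>2) - card A * m\<^sup>2"
    by (simp add: power2_diff sum.distrib sum_subtractf flip: sum_distrib_left sum_distrib_right)
       (simp add: power2_eq_square)
  then show ?thesis
    by (simp add: m_def)
qed

lemma sum_sq_doubly_stochastic_mult_le: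
  fixes W :: "real^'n::finite^'n" and s :: "'n \<Rightarrow> real"
  assumes nonneg: "\<And>i j. 0 \<le> W $ i $ j"
    and col_sum: "\<And>j. (\<Sum>i\<in>UNIV. W $ i $ j) = 1"
    and row_sum: "\<And>i. (\<Sum>j\<in>UNIV. W $ i $ j) = 1"
  shows "(\<Sum>j\<in>UNIV. (\<Sum>i\<in>UNIV. s i * W $ i $ j)\<^sup>2) \<le> (\<Sum>i\<in>UNIV. (s i)\<^sup>2)"
proof -
  have jensen: "(\<Sum>i\<in>UNIV. s i * W $ i $ j)\<^sup>2 \<le> (\<Sum>i\<in>UNIV. W $ i $ j * (s i)\<^sup>2)" for j
    using convex_on_sum[OF finite_class.finite_UNIV UNIV_not_empty convex_power2,
        of "\<lambda>i. W $ i $ j" s]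
    by (simp add: col_sum nonneg mult.commute)
  have "(\<Sum>j\<in>UNIV. (\<Sum>i\<in>UNIV. s i * W $ i $ j)\<^sup>2) \<le> (\<Sum>j\<in>UNIV. \<Sum>i\<in>UNIV. W $ i $ j * (s i)\<^sup>2)"
    by (intro sum_mono jensen)
  also have "\<dots> = (\<Sum>i\<in>UNIV. (s i)\<^sup>2 * (\<Sum>j\<in>UNIV. W $ i $ j))"
    by (subst sum.swap) (simp add: sum_distrib_right mult.commute)
  also have "\<dots> = (\<Sum>i\<in>UNIV. (s i)\<^sup>2)"
    by (simp add: row_sum)
  finally show ?thesis .
qed

lemma frob_sq_centered_mult_le:
  fixes C :: "real^'n::finite^'d::finite"
  assumes "W \<in> mixing_set E"
  shows "frob_sq ((C - avg_mat C) ** W) \<le> frob_sq C"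
proof -
  let ?centered = "\<lambda>k i. C $ k $ i - (\<Sum>l\<in>UNIV. C $ k $ l) / CARD('n)"
  have "frob_sq ((C - avg_mat C) ** W)
      = (\<Sum>k\<in>UNIV. \<Sum>j\<in>UNIV. (\<Sum>i\<in>UNIV. ?centered k i * W $ i $ j)\<^sup>2)"
    by (simp add: frob_sq_def avg_mat_def matrix_matrix_mult_def sum_divide_distrib)
  also have "\<dots> \<le> (\<Sum>k\<in>UNIV. \<Sum>i\<in>UNIV. (?centered k i)\<^sup>2)"
    using assms unfolding mixing_set_def
    by (intro sum_mono sum_sq_doubly_stochastic_mult_le) auto
  also have "\<dots> \<le> frob_sq C"
    unfolding frob_sq_def by (rule sum_mono) (rule sum_sq_centered_le, simp)
  finally show ?thesis .
qed

lemma frob_sq_centered_mult_perturb_le: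
  fixes A B :: "real^'n::finite^'d::finite"
  assumes "W \<in> mixing_set E"
  shows "frob_sq ((A - avg_mat A) ** W)
    \<le> 2 * frob_sq ((B - avg_mat B) ** W) + 2 * frob_sq (A - B)"
proof -
  have "(A - avg_mat A) ** W = (B - avg_mat B) ** W + ((A - B) - avg_mat (A - B)) ** W"
    by (simp add: avg_mat_diff flip: matrix_add_rdistrib)
  then have "frob_sq ((A - avg_mat A) ** W)
      \<le> 2 * frob_sq ((B - avg_mat B) ** W) + 2 * frob_sq (((A - B) - avg_mat (A - B)) ** W)"
    by (simp only: frob_sq_add_le)
  also have "\<dots> \<le> 2 * frob_sq ((B - avg_mat B) ** W) + 2 * frob_sq (A - B)"
    using frob_sq_centered_mult_le[OF assms, of "A - B"] by simp
  finally show ?thesis .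
qed

lemma borel_measurable_vec_nth [measurable (raw)]:
  fixes f :: "'a \<Rightarrow> 'b::topological_space^'n::finite"
  assumes "f \<in> borel_measurable M"
  shows "(\<lambda>x. f x $ i) \<in> borel_measurable M"
  using measurable_compose[OF assms borel_measurable_continuous_onI
      [OF continuous_on_component[OF continuous_on_id]]]
  by simp

lemma borel_measurable_vec_lambda [measurable (raw)]:
  fixes f :: "'a \<Rightarrow> 'n::finite \<Rightarrow> 'b::euclidean_space"
  assumes "\<And>i. (\<lambda>x. f x i) \<in> borel_measurable M"
  shows "(\<lambda>x. \<chi> i. f x i) \<in> borel_measurable M"
proof (rule borel_measurable_euclidean_space[THEN iffD2], intro ballI)
  fix b :: "'b^'n"
  assume "b \<in> Basis"
  then obtain i u where "b = axis i u"
    by (auto simp: Basis_vec_def)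
  then show "(\<lambda>x. (\<chi> i. f x i) \<bullet> b) \<in> borel_measurable M"
    using assms by (simp add: inner_axis)
qed

lemma integral_frob_sq_centered_mult_le:
  fixes A B :: "'a \<Rightarrow> real^'n::finite^'d::finite" and W :: "'a \<Rightarrow> real^'n^'n"
  assumes [measurable]: "A \<in> borel_measurable M" "B \<in> borel_measurable M" "W \<in> borel_measurable M"
    and mix: "\<And>x. x \<in> space M \<Longrightarrow> W x \<in> mixing_set E"
    and int_A: "integrable M (\<lambda>x. frob_sq (A x))"
    and int_AB: "integrable M (\<lambda>x. frob_sq (A x - B x))"
  shows "(\<integral>x. frob_sq ((A x - avg_mat (A x)) ** W x) \<partial>M)
    \<le> 2 * (\<integral>x. frob_sq ((B x - avg_mat (B x)) ** W x) \<partial>M) + 2 * (\<integral>x. frob_sq (A x - B x) \<partial>M)"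
proof -
  define L where "L x = frob_sq ((A x - avg_mat (A x)) ** W x)" for x
  define R where "R x = frob_sq ((B x - avg_mat (B x)) ** W x)" for x
  have L_meas: "L \<in> borel_measurable M" and R_meas: "R \<in> borel_measurable M"
    unfolding L_def R_def frob_sq_def avg_mat_def matrix_matrix_mult_def by measurable
  have L_le: "L x \<le> frob_sq (A x)" if "x \<in> space M" for x
    unfolding L_def by (rule frob_sq_centered_mult_le[OF mix[OF that]])
  have nonneg: "0 \<le> L x" "0 \<le> R x" for x
    by (simp_all add: L_def R_def frob_sq_nonneg)
  have L_le_R: "L x \<le> 2 * R x + 2 * frob_sq (A x - B x)" if "x \<in> space M" for x
    unfolding L_def R_def by (rule frob_sq_centered_mult_perturb_le[OF mix[OF that]])
  have R_le_L: "R x \<le> 2 * L x + 2 * frob_sq (A x - B x)" if "x \<in> space M" for x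
    unfolding L_def R_def frob_sq_minus_commute[of "A x"]
    by (rule frob_sq_centered_mult_perturb_le[OF mix[OF that]])
  have int_L: "integrable M L"
    by (intro Bochner_Integration.integrable_bound[OF int_A L_meas] AE_I2)
       (simp add: L_le nonneg frob_sq_nonneg)
  \<comment> \<open>needed: a non-integrable R would have Bochner integral 0\<close>
  have int_R: "integrable M R"
  proof (rule Bochner_Integration.integrable_bound[OF _ R_meas])
    show "integrable M (\<lambda>x. 2 * L x + 2 * frob_sq (A x - B x))"
      using int_L int_AB by simp
    show "AE x in M. norm (R x) \<le> norm (2 * L x + 2 * frob_sq (A x - B x))"
      by (intro AE_I2) (simp add: R_le_L nonneg frob_sq_nonneg)
  qed
  have "(\<integral>x. L x \<partial>M) \<le> (\<integral>x. 2 * R x + 2 * frob_sq (A x - B x) \<partial>M)"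
    using int_L int_R int_AB L_le_R by (intro integral_mono) simp_all
  also have "\<dots> = 2 * (\<integral>x. R x \<partial>M) + 2 * (\<integral>x. frob_sq (A x - B x) \<partial>M)"
    using int_R int_AB by simp
  finally show ?thesis
    by (simp only: L_def R_def)
qed

lemma
  fixes g :: "'b \<Rightarrow> 'c::{banach, second_countable_topology}"
  assumes "\<And>i. i \<in> I \<Longrightarrow> prob_space (M i)" and "j \<in> I"
  shows integrable_PiM_component:
      "integrable (M j) g \<Longrightarrow> integrable (PiM I M) (\<lambda>x. g (x j))"
    and integral_PiM_component:
      "g \<in> borel_measurable (M j) \<Longrightarrow> (\<integral>x. g (x j) \<partial>PiM I M) = (\<integral>y. g y \<partial>M j)"
proof -
  have component: "(\<lambda>x. x j) \<in> measurable (PiM I M) (M j)"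
    using assms(2) by (rule measurable_component_singleton)
  have distr: "distr (PiM I M) (M j) (\<lambda>x. x j) = M j"
    using assms by (rule distr_PiM_component)
  show "integrable (M j) g \<Longrightarrow> integrable (PiM I M) (\<lambda>x. g (x j))"
    using integrable_distr_eq[OF component, of g] distr by auto
  show "g \<in> borel_measurable (M j) \<Longrightarrow> (\<integral>x. g (x j) \<partial>PiM I M) = (\<integral>y. g y \<partial>M j)"
    using integral_distr[OF component, of g] distr by (simp add: comp_def)
qed

theorem proposition2:
  fixes D :: "'n::finite \<Rightarrow> 'b measure"
    and F :: "'n \<Rightarrow> real^'d::finite \<Rightarrow> 'b \<Rightarrow> real"
    and f :: "'n \<Rightarrow> real^'d \<Rightarrow> real"
    and gF :: "'n \<Rightarrow> real^'d \<Rightarrow> 'b \<Rightarrow> real^'d"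
    and gf :: "'n \<Rightarrow> real^'d \<Rightarrow> real^'d"
    and E :: "('n \<times> 'n) set"
    and Wstar :: "('n \<Rightarrow> 'b) \<Rightarrow> real^'n^'n"
    and xbar :: "real^'d"
    and \<sigma> :: real
  assumes prob: "\<And>i. prob_space (D i)"
    and f_def: "\<And>i x. f i x = (\<integral>\<xi>. F i x \<xi> \<partial>D i)"
    and gradF: "\<And>i x \<xi>. \<xi> \<in> space (D i) \<Longrightarrow> GDERIV (\<lambda>y. F i y \<xi>) x :> gF i x \<xi>"
    and gradf: "\<And>i x. GDERIV (f i) x :> gf i x"
    and gF_meas: "\<And>i x. gF i x \<in> borel_measurable (D i)"
    and var_int: "\<And>i x. integrable (D i) (\<lambda>\<xi>. (norm (gF i x \<xi> - gf i x))^2)"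
    and var_bound: "\<And>x. (1 / real CARD('n)) *
        (\<Sum>i\<in>UNIV. \<integral>\<xi>. (norm (gF i x \<xi> - gf i x))^2 \<partial>D i) \<le> \<sigma>^2"
    and W_meas: "Wstar \<in> borel_measurable (PiM UNIV D)"
    and W_mix: "\<And>\<xi>. \<xi> \<in> space (PiM UNIV D) \<Longrightarrow> Wstar \<xi> \<in> mixing_set E"
  shows "(\<integral>\<xi>. frob_sq ((colmat (\<lambda>i. gf i xbar) - avg_mat (colmat (\<lambda>i. gf i xbar))) ** Wstar \<xi>)
            \<partial>PiM UNIV D)
         \<le> 2 * (\<integral>\<xi>. frob_sq ((colmat (\<lambda>i. gF i xbar (\<xi> i))
                                 - avg_mat (colmat (\<lambda>i. gF i xbar (\<xi> i)))) ** Wstar \<xi>)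
                  \<partial>PiM UNIV D)
           + 2 * real CARD('n) * \<sigma>^2"
proof -
  let ?G = "colmat (\<lambda>i. gf i xbar)" and ?G\<xi> = "\<lambda>\<xi>. colmat (\<lambda>i. gF i xbar (\<xi> i))"
  interpret P: prob_space "PiM UNIV D"
    by (intro prob_space_PiM prob)
  define dev where "dev i = (\<lambda>y. (norm (gF i xbar y - gf i xbar))\<^sup>2)" for i
  have int_dev: "integrable (D i) (dev i)" for i
    unfolding dev_def by (rule var_int)
  have int_dev_PiM: "integrable (PiM UNIV D) (\<lambda>\<xi>. dev i (\<xi> i))" for i
    by (rule integrable_PiM_component[OF prob UNIV_I int_dev])
  have frob_dev: "frob_sq (?G - ?G\<xi> \<xi>) = (\<Sum>i\<in>UNIV. dev i (\<xi> i))" for \<xi>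
    by (simp add: colmat_diff frob_sq_colmat dev_def norm_minus_commute)
  have "(\<integral>\<xi>. frob_sq (?G - ?G\<xi> \<xi>) \<partial>PiM UNIV D) = (\<Sum>i\<in>UNIV. \<integral>y. dev i y \<partial>D i)"
    using int_dev_PiM borel_measurable_integrable[OF int_dev]
    by (simp add: frob_dev integral_PiM_component[of UNIV D, OF prob UNIV_I])
  also have "\<dots> \<le> CARD('n) * \<sigma>\<^sup>2"
    using var_bound[of xbar] by (simp add: dev_def field_simps)
  finally have "(\<integral>\<xi>. frob_sq (?G - ?G\<xi> \<xi>) \<partial>PiM UNIV D) \<le> CARD('n) * \<sigma>\<^sup>2" .
  moreover have "?G\<xi> \<in> borel_measurable (PiM UNIV D)"
    using gF_meas unfolding colmat_def by measurable
  ultimately show ?thesis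
    using integral_frob_sq_centered_mult_le[where A = "\<lambda>_. ?G" and B = ?G\<xi>, OF _ _ W_meas W_mix]
      int_dev_PiM by (simp add: frob_dev)
qed

end
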